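(* Let $P,Q\in\Gamma_n$ with $P\ne Q$, and $0<r\le R$ with $r\le p_i/q_i\le R$ for all $i$. Then $$r\le\frac{\chi^2(P\|Q)^{2/3}}{4\,h(P\|Q)^{2/3}}\le R.$$
   Context: $\Gamma_n=\{P=(p_1,\dots,p_n): p_i>0,\ \sum_i p_i=1\}$, $n\ge2$. $\chi^2(P\|Q)=\sum_i\frac{(p_i-q_i)^2}{q_i}$ and $h(P\|Q)=\frac12\sum_i(\sqrt{p_i}-\sqrt{q_i})^2$ (Hellinger discrimination). *)

theory Defs
  imports Complex_Main
begin

definition Gamma :: "nat \<Rightarrow> (nat \<Rightarrow> real) set" where
  "Gamma n = {p. (\<forall>i<n. p i > 0) \<and> (\<Sum>i<n. p i) = 1}"

definition chi2 :: "nat \<Rightarrow> (nat \<Rightarrow> real) \<Rightarrow> (nat \<Rightarrow> real) \<Rightarrow> real" where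
  "chi2 n p q = (\<Sum>i<n. (p i - q i)^2 / q i)"

definition hellinger :: "nat \<Rightarrow> (nat \<Rightarrow> real) \<Rightarrow> (nat \<Rightarrow> real) \<Rightarrow> real" where
  "hellinger n p q = (1/2) * (\<Sum>i<n. (sqrt (p i) - sqrt (q i))^2)"

end

theory Submission
  imports Defs
begin

text \<open>Summand by summand, (p - q)^2 / q = (sqrt (p/q) + 1)^2 (sqrt p - sqrt q)^2, and for
  probability vectors the ratio bounds force r \<le> 1 \<le> R, which puts the factor
  (sqrt (p/q) + 1)^2 between 4r and 4R. Hence 8 r h \<le> chi2 \<le> 8 R h. The quantity in the
  theorem is (chi2 / (8 h)) powr (2/3), and raising to a power in (0,1] moves a number
  towards 1, so it cannot leave an interval [r, R] containing 1.\<close>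

lemma chi2_summand_eq:
  fixes p q :: real
  assumes "p > 0" "q > 0"
  shows "(p - q)^2 / q = (sqrt (p / q) + 1)^2 * (sqrt p - sqrt q)^2"
proof -
  have "p - q = (sqrt p - sqrt q) * (sqrt p + sqrt q)"
    using assms by (simp add: algebra_simps)
  moreover have "sqrt p + sqrt q = (sqrt (p / q) + 1) * sqrt q"
    using assms by (simp add: algebra_simps real_sqrt_divide)
  ultimately show ?thesis
    using assms by (simp add: power_mult_distrib)
qed

lemma four_mult_le_sqrt_plus_one_sq:
  fixes t :: real
  assumes "0 \<le> t" "t \<le> 1"
  shows "4 * t \<le> (sqrt t + 1)^2"
proof -
  have "t \<le> sqrt t"
    using assms by (intro real_le_rsqrt) (simp add: power2_eq_square mult_left_le)
  moreover have "4 * sqrt t \<le> (sqrt t + 1)^2"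
    using assms sum_squares_ge_zero[of "sqrt t - 1" 0] by (simp add: power2_eq_square algebra_simps)
  ultimately show ?thesis
    by linarith
qed

lemma sqrt_plus_one_sq_le_four_mult:
  fixes t :: real
  assumes "1 \<le> t"
  shows "(sqrt t + 1)^2 \<le> 4 * t"
proof -
  have "sqrt t + 1 \<le> 2 * sqrt t"
    using assms by simp
  then have "(sqrt t + 1)^2 \<le> (2 * sqrt t)^2"
    using assms by (intro power_mono) auto
  with assms show ?thesis
    by (simp add: power_mult_distrib)
qed

lemma chi2_summand_bounds:
  fixes p q r R :: real
  assumes "p > 0" "q > 0" "0 \<le> r" "r \<le> 1" "1 \<le> R" "r \<le> p / q" "p / q \<le> R"
  shows "4 * r * (sqrt p - sqrt q)^2 \<le> (p - q)^2 / q"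
    and "(p - q)^2 / q \<le> 4 * R * (sqrt p - sqrt q)^2"
proof -
  have "(sqrt r + 1)^2 \<le> (sqrt (p / q) + 1)^2"
    using assms by (intro power_mono) auto
  then have "4 * r \<le> (sqrt (p / q) + 1)^2"
    using four_mult_le_sqrt_plus_one_sq[of r] assms by linarith
  then show "4 * r * (sqrt p - sqrt q)^2 \<le> (p - q)^2 / q"
    unfolding chi2_summand_eq[OF assms(1,2)] by (simp add: mult_right_mono)
  have "(sqrt (p / q) + 1)^2 \<le> (sqrt R + 1)^2"
    using assms by (intro power_mono) auto
  then have "(sqrt (p / q) + 1)^2 \<le> 4 * R"
    using sqrt_plus_one_sq_le_four_mult[OF assms(5)] by linarith
  then show "(p - q)^2 / q \<le> 4 * R * (sqrt p - sqrt q)^2"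
    unfolding chi2_summand_eq[OF assms(1,2)] by (simp add: mult_right_mono)
qed

lemma chi2_hellinger_bounds:
  assumes pos: "\<And>i. i < n \<Longrightarrow> p i > 0 \<and> q i > 0"
    and ratio: "\<And>i. i < n \<Longrightarrow> r \<le> p i / q i \<and> p i / q i \<le> R"
    and "0 \<le> r" "r \<le> 1" "1 \<le> R"
  shows "8 * r * hellinger n p q \<le> chi2 n p q"
    and "chi2 n p q \<le> 8 * R * hellinger n p q"
proof -
  have "8 * r * hellinger n p q = (\<Sum>i<n. 4 * r * (sqrt (p i) - sqrt (q i))^2)"
    by (simp add: hellinger_def sum_distrib_left mult.assoc)
  also have "\<dots> \<le> chi2 n p q"
    unfolding chi2_def using pos ratio assms by (intro sum_mono chi2_summand_bounds(1)) auto
  finally show "8 * r * hellinger n p q \<le> chi2 n p q" .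
  have "chi2 n p q \<le> (\<Sum>i<n. 4 * R * (sqrt (p i) - sqrt (q i))^2)"
    unfolding chi2_def using pos ratio assms by (intro sum_mono chi2_summand_bounds(2)) auto
  also have "\<dots> = 8 * R * hellinger n p q"
    by (simp add: hellinger_def sum_distrib_left mult.assoc)
  finally show "chi2 n p q \<le> 8 * R * hellinger n p q" .
qed

lemma Gamma_ratio_bounds_enclose_one:
  assumes "p \<in> Gamma n" "q \<in> Gamma n"
    and ratio: "\<forall>i<n. r \<le> p i / q i \<and> p i / q i \<le> R"
  shows "r \<le> 1" "1 \<le> R"
proof -
  have q_pos: "\<And>i. i < n \<Longrightarrow> q i > 0" and sums: "(\<Sum>i<n. p i) = 1" "(\<Sum>i<n. q i) = 1"
    using assms(1,2) by (auto simp: Gamma_def)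
  have "(\<Sum>i<n. r * q i) \<le> (\<Sum>i<n. p i)"
    using ratio q_pos by (intro sum_mono) (simp add: pos_le_divide_eq)
  then show "r \<le> 1"
    by (simp add: sums flip: sum_distrib_left)
  have "(\<Sum>i<n. p i) \<le> (\<Sum>i<n. R * q i)"
    using ratio q_pos by (intro sum_mono) (simp add: pos_divide_le_eq)
  then show "1 \<le> R"
    by (simp add: sums flip: sum_distrib_left)
qed

lemma hellinger_pos:
  assumes "\<And>i. i < n \<Longrightarrow> p i \<ge> 0 \<and> q i \<ge> 0" "i < n" "p i \<noteq> q i"
  shows "hellinger n p q > 0"
proof -
  have "0 < (sqrt (p i) - sqrt (q i))^2"
    using assms by simp
  also have "\<dots> \<le> (\<Sum>j<n. (sqrt (p j) - sqrt (q j))^2)"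
    using assms(2) by (intro member_le_sum) auto
  finally show ?thesis
    by (simp add: hellinger_def)
qed

lemma powr_between_bounds_around_one:
  fixes t r R e :: real
  assumes "0 < e" "e \<le> 1" "0 \<le> r" "r \<le> 1" "1 \<le> R" "r \<le> t" "t \<le> R"
  shows "r \<le> t powr e" "t powr e \<le> R"
proof -
  have "r \<le> r powr e"
    using powr_mono'[of e 1 r] assms by simp
  also have "\<dots> \<le> t powr e"
    using assms by (intro powr_mono2) auto
  finally show "r \<le> t powr e" .
  have "t powr e \<le> R powr e"
    using assms by (intro powr_mono2) auto
  also have "\<dots> \<le> R"
    using powr_mono[of e 1 R] assms by simp
  finally show "t powr e \<le> R" .
qed

lemma powr_two_thirds_div_eq:
  fixes c h :: real
  assumes "0 \<le> h"
  shows "c powr (2/3) / (4 * h powr (2/3)) = (c / (8 * h)) powr (2/3)"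
proof -
  have "(8::real) powr (2/3) = (2 powr 3) powr (2/3)"
    by simp
  also have "\<dots> = 4"
    by (simp add: powr_powr)
  finally show ?thesis
    using assms by (simp add: powr_divide powr_mult)
qed

theorem mainTheorem14:
  fixes n :: nat and p q :: "nat \<Rightarrow> real" and r R :: real
  assumes "n \<ge> 2"
    and "p \<in> Gamma n" and "q \<in> Gamma n"
    and "\<exists>i<n. p i \<noteq> q i"
    and "0 < r" and "r \<le> R"
    and "\<forall>i<n. r \<le> p i / q i \<and> p i / q i \<le> R"
  shows "r \<le> chi2 n p q powr (2/3) / (4 * hellinger n p q powr (2/3))
       \<and> chi2 n p q powr (2/3) / (4 * hellinger n p q powr (2/3)) \<le> R"
proof -
  have pos: "\<And>i. i < n \<Longrightarrow> p i > 0 \<and> q i > 0"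
    using assms(2,3) by (simp add: Gamma_def)
  note one_between = Gamma_ratio_bounds_enclose_one[OF assms(2,3,7)]
  have h_pos: "hellinger n p q > 0"
    using assms(4) pos by (auto intro: hellinger_pos simp: less_imp_le)
  have chi2_bounds: "8 * r * hellinger n p q \<le> chi2 n p q" "chi2 n p q \<le> 8 * R * hellinger n p q"
    using chi2_hellinger_bounds[of n p q r R] pos assms(5,7) one_between by auto
  define t where "t = chi2 n p q / (8 * hellinger n p q)"
  have "r \<le> t" "t \<le> R"
    using chi2_bounds h_pos by (simp_all add: t_def pos_le_divide_eq pos_divide_le_eq ac_simps)
  then show ?thesis
    unfolding powr_two_thirds_div_eq[OF less_imp_le[OF h_pos]] t_def[symmetric]
    using powr_between_bounds_around_one[of "2/3" r R t] assms(5) one_between by auto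
qed

end
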